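(* Let $\mathbb{F}$ be any field, and let $f\in\mathbb{F}[x_1,\dots,x_n]$ be computed by a diagonal depth-4 circuit $\Phi=\sum_{i=1}^k\Psi_i$ with $\Psi_i=\prod_jP_{i,j}^{e_{i,j}}$ and $P_{i,j}=\sum_{m=1}^ng_{i,j,m}(x_m)$ ($g_{i,j,m}$ univariate). Let $\mathrm{sdeg}(\Phi)=\max_i\sum_je_{i,j}\deg(P_{i,j})$. Then $f$ is computed by a read-once oblivious ABP with variable order $x_1<\dots<x_n$, of depth $n$ and width $\le k\cdot\max_{i}|\vec e_i|_\times$, in which every edge label is a univariate polynomial of degree $\le\mathrm{sdeg}(\Phi)$.
   Context: $\vec e_i=(e_{i,j})_j$ and $|\vec e_i|_\times=\prod_j(1+e_{i,j})$. A read-once oblivious ABP of depth $n$ with variable order $x_1<\dots<x_n$ is a directed acyclic graph with vertices in layers $0,\dots,n$, a single source in layer 0, a single sink in layer $n$, and edges only from layer $j-1$ to layer $j$ each labeled by a univariate polynomial in $x_j$; it computes the sum over source-sink paths of the product of labels; its width is the maximum number of vertices in a layer. *)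

theory Defs
  imports "HOL-Library.Poly_Mapping" "HOL-Computational_Algebra.Polynomial"
begin

text \<open>Multivariate polynomials over 'a in variables x_0, x_1, ... (indexed by nat):
  finitely supported maps from monomials (exponent vectors nat =>0 nat) to coefficients,
  with the convolution ring structure of Poly_Mapping.\<close>
type_synonym 'a mpoly = "(nat \<Rightarrow>\<^sub>0 nat) \<Rightarrow>\<^sub>0 'a"

definition upoly_in :: "nat \<Rightarrow> 'a::comm_ring_1 poly \<Rightarrow> 'a mpoly" where
  "upoly_in m p = (\<Sum>d\<le>degree p. Poly_Mapping.single (Poly_Mapping.single m d) (coeff p d))"

definition mdeg :: "'a::zero mpoly \<Rightarrow> nat" where
  "mdeg p = Max (insert 0 ((\<lambda>mon. \<Sum>v\<in>Poly_Mapping.keys mon. Poly_Mapping.lookup mon v) ` Poly_Mapping.keys p))"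

text \<open>A diagonal depth-4 circuit: a list of k summands Psi_i; each summand is a list of
  factors (e_ij, g_ij) standing for P_ij^e_ij with P_ij = sum_{m<n} g_ij m (x_m).\<close>
type_synonym 'a d4circuit = "(nat \<times> (nat \<Rightarrow> 'a poly)) list list"

definition d4_factor :: "nat \<Rightarrow> (nat \<Rightarrow> 'a::comm_ring_1 poly) \<Rightarrow> 'a mpoly" where
  "d4_factor n g = (\<Sum>m<n. upoly_in m (g m))"

definition d4_eval :: "nat \<Rightarrow> 'a::comm_ring_1 d4circuit \<Rightarrow> 'a mpoly" where
  "d4_eval n C = (\<Sum>Psi\<leftarrow>C. \<Prod>(e, g)\<leftarrow>Psi. d4_factor n g ^ e)"

definition d4_sdeg :: "nat \<Rightarrow> 'a::comm_ring_1 d4circuit \<Rightarrow> nat" where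
  "d4_sdeg n C = Max (insert 0 (set (map (\<lambda>Psi. \<Sum>(e, g)\<leftarrow>Psi. e * mdeg (d4_factor n g)) C)))"

text \<open>|e_i|_x = prod_j (1 + e_ij), and its maximum over the summands.\<close>
definition exp_prod :: "(nat \<times> 'b) list \<Rightarrow> nat" where
  "exp_prod Psi = (\<Prod>(e, g)\<leftarrow>Psi. 1 + e)"

definition d4_max_exp_prod :: "'b d4circuit \<Rightarrow> nat" where
  "d4_max_exp_prod C = Max (insert 0 (set (map exp_prod C)))"

text \<open>Read-once oblivious ABP of depth n with variable order x_0 < ... < x_(n-1):
  layer j (0 \<le> j \<le> n) has vertices {0..<w j}; the edge from vertex u in layer j to
  vertex v in layer j+1 (j < n) carries the univariate label L j u v, read as a polynomial
  in x_j (a zero label means "no edge"). Source = vertex 0 of layer 0, sink = vertex 0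
  of layer n.\<close>
definition abp_paths :: "nat \<Rightarrow> (nat \<Rightarrow> nat) \<Rightarrow> nat list set" where
  "abp_paths n w = {ps. length ps = Suc n \<and> (\<forall>j\<le>n. ps ! j < w j) \<and> ps ! 0 = 0 \<and> ps ! n = 0}"

definition abp_eval :: "nat \<Rightarrow> (nat \<Rightarrow> nat) \<Rightarrow> (nat \<Rightarrow> nat \<Rightarrow> nat \<Rightarrow> 'a::comm_ring_1 poly) \<Rightarrow> 'a mpoly" where
  "abp_eval n w L = (\<Sum>ps\<in>abp_paths n w. \<Prod>j<n. upoly_in j (L j (ps ! j) (ps ! Suc j)))"

definition abp_width :: "nat \<Rightarrow> (nat \<Rightarrow> nat) \<Rightarrow> nat" where
  "abp_width n w = Max (w ` {..n})"

end

theory Submission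
  imports Defs
begin

(* The semantics of an ABP is handled through the backward value  abp_value n w L t u,  the
   polynomial computed by all paths from vertex u of layer t to the sink.  It satisfies a
   one-layer recursion, and at the source it equals the path sum abp_eval.  Three constructions are combined:
     (1) a power P^e of a sum of univariates, of width e + 1 (vertex r of layer t carries the
         suffix power (sum_{m>=t} g_m(x_m))^r, labels are binomial terms);
     (2) the product of two ABPs (tensor product of layers: widths multiply, degrees add);
     (3) the sum of two ABPs (disjoint union of the inner layers: widths add, degrees max).
   Products of (1) build each summand, sums of those build the whole circuit. *)

section \<open>Univariate polynomials as multivariate ones\<close>

definition mconst :: "'a::comm_ring_1 \<Rightarrow> 'a mpoly" where
  "mconst c = Poly_Mapping.single 0 c"

definition mvar :: "nat \<Rightarrow> 'a::comm_ring_1 mpoly" where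
  "mvar m = Poly_Mapping.single (Poly_Mapping.single m 1) 1"

lemma mvar_power: "mvar m ^ d = Poly_Mapping.single (Poly_Mapping.single m d) (1::'a::comm_ring_1)"
  by (induction d) (simp_all add: mvar_def mult_single single_add[symmetric] add.commute)

lemma mconst_0 [simp]: "mconst 0 = (0::'a::comm_ring_1 mpoly)"
  by (simp add: mconst_def)

lemma mconst_nonzero: "c \<noteq> 0 \<Longrightarrow> mconst c \<noteq> 0"
  unfolding mconst_def by (metis lookup_single_eq lookup_zero)

lemma mconst_add: "mconst (a + b) = mconst a + mconst b"
  unfolding mconst_def by (simp add: single_add)

lemma mconst_mult: "mconst (a * b) = mconst a * mconst b"
  unfolding mconst_def by (simp add: mult_single)

lemma map_poly_mconst_add: "map_poly mconst (p + q) = map_poly mconst p + map_poly mconst q"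
  by (intro poly_eqI) (simp add: coeff_map_poly mconst_add)

lemma map_poly_mconst_mult:
  "map_poly mconst (p * q) = map_poly mconst p * (map_poly mconst q :: 'a::comm_ring_1 mpoly poly)"
proof (induction p)
  case 0
  then show ?case by simp
next
  case (pCons a p)
  have smult: "map_poly mconst (smult a q) = smult (mconst a) (map_poly mconst q)"
    by (rule map_poly_smult) (simp_all add: mconst_mult)
  have "map_poly mconst (pCons a p * q) = map_poly mconst (smult a q + pCons 0 (p * q))"
    by simp
  also have "\<dots> = smult (mconst a) (map_poly mconst q) + pCons 0 (map_poly mconst p * map_poly mconst q)"
    by (simp add: map_poly_mconst_add smult map_poly_pCons pCons.IH)
  also have "\<dots> = map_poly mconst (pCons a p) * map_poly mconst q"
    by (simp add: map_poly_pCons mconst_def)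
  finally show ?case .
qed

text \<open>Reading p in the variable x_m is evaluating its constant-coefficient image at x_m;
  hence upoly_in is a ring homomorphism.\<close>
lemma upoly_in_as_poly: "upoly_in m p = poly (map_poly mconst p) (mvar m)"
proof -
  have "degree (map_poly mconst p) = degree p"
    by (rule degree_map_poly) (rule mconst_nonzero)
  then show ?thesis
    by (simp add: upoly_in_def poly_altdef coeff_map_poly mconst_def mvar_power mult_single)
qed

lemma upoly_in_add: "upoly_in m (p + q) = upoly_in m p + upoly_in m q"
  by (simp add: upoly_in_as_poly map_poly_mconst_add)

lemma upoly_in_mult: "upoly_in m (p * q) = upoly_in m p * upoly_in m q"
  by (simp add: upoly_in_as_poly map_poly_mconst_mult)

lemma upoly_in_0 [simp]: "upoly_in m 0 = 0"
  by (simp add: upoly_in_as_poly)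

lemma upoly_in_1 [simp]: "upoly_in m 1 = 1"
  by (simp add: upoly_in_as_poly mconst_def)

lemma upoly_in_of_nat [simp]: "upoly_in m (of_nat k) = of_nat k"
  by (induction k) (simp_all add: upoly_in_add)

lemma upoly_in_power: "upoly_in m (p ^ k) = upoly_in m p ^ k"
  by (induction k) (simp_all add: upoly_in_mult)

text \<open>The univariate components of a sum of univariates are visible in its total degree:
  the monomial x_t^D with D = deg g_t occurs in it.  This links the label degrees to sdeg.\<close>
lemma lookup_upoly_in_single:
  assumes "D > 0"
  shows "Poly_Mapping.lookup (upoly_in m p) (Poly_Mapping.single t D) = (if m = t then coeff p D else 0)"
proof -
  have single_eq: "Poly_Mapping.single m d = Poly_Mapping.single t D \<longleftrightarrow> m = t \<and> d = D" for d
    using assms by (metis lookup_single_eq lookup_single_not_eq single_zero neq0_conv)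
  have "Poly_Mapping.lookup (upoly_in m p) (Poly_Mapping.single t D) =
      (\<Sum>d\<le>degree p. if m = t \<and> d = D then coeff p d else 0)"
    unfolding upoly_in_def lookup_sum lookup_single
    by (intro sum.cong) (auto simp: when_def single_eq)
  also have "\<dots> = (if m = t then coeff p D else 0)"
    by (cases "m = t") (auto simp: coeff_eq_0 not_le)
  finally show ?thesis .
qed

lemma degree_le_mdeg_d4_factor:
  assumes "t < n"
  shows "degree (g t) \<le> mdeg (d4_factor n g)"
proof (cases "degree (g t) = 0")
  case False
  define D where "D = degree (g t)"
  have D_pos: "D > 0" using False D_def by simp
  have "Poly_Mapping.lookup (d4_factor n g) (Poly_Mapping.single t D) = coeff (g t) D"
    using assms unfolding d4_factor_def lookup_sum by (simp add: lookup_upoly_in_single[OF D_pos])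
  also have "\<dots> \<noteq> 0"
    using D_pos unfolding D_def by (metis leading_coeff_0_iff less_numeral_extra(3) degree_0)
  finally have "Poly_Mapping.single t D \<in> Poly_Mapping.keys (d4_factor n g)"
    by (simp add: in_keys_iff)
  moreover have "(\<Sum>v\<in>Poly_Mapping.keys (Poly_Mapping.single t D). Poly_Mapping.lookup (Poly_Mapping.single t D) v) = D"
    using D_pos by simp
  ultimately show ?thesis
    unfolding mdeg_def D_def[symmetric] by (intro Max_ge) force+
qed simp

section \<open>The backward value of an ABP\<close>

function abp_value :: "nat \<Rightarrow> (nat \<Rightarrow> nat) \<Rightarrow> (nat \<Rightarrow> nat \<Rightarrow> nat \<Rightarrow> 'a::comm_ring_1 poly) \<Rightarrow> nat \<Rightarrow> nat \<Rightarrow> 'a mpoly" where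
  "abp_value n w L t u = (if n \<le> t then (if u = 0 then 1 else 0) else
     (\<Sum>v<w (Suc t). upoly_in t (L t u v) * abp_value n w L (Suc t) v))"
  by pat_completeness auto
termination by (relation "measure (\<lambda>(n, w, L, t, u). n - t)") auto

declare abp_value.simps [simp del]

lemma abp_value_sink: "abp_value n w L n u = (if u = 0 then 1 else 0)"
  by (simp add: abp_value.simps)

lemma abp_value_step:
  "t < n \<Longrightarrow> abp_value n w L t u = (\<Sum>v<w (Suc t). upoly_in t (L t u v) * abp_value n w L (Suc t) v)"
  by (simp add: abp_value.simps [of n w L t u])

text \<open>Paths from vertex u of layer t to the sink, as vertex lists indexed relative to t.\<close>
definition suffix_paths :: "nat \<Rightarrow> (nat \<Rightarrow> nat) \<Rightarrow> nat \<Rightarrow> nat \<Rightarrow> nat list set" where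
  "suffix_paths n w t u = {ps. length ps = Suc (n - t)
     \<and> (\<forall>k. 0 < k \<and> k \<le> n - t \<longrightarrow> ps ! k < w (t + k)) \<and> ps ! 0 = u \<and> ps ! (n - t) = 0}"

lemma suffix_paths_sink: "suffix_paths n w n u = (if u = 0 then {[0]} else {})"
  by (auto simp: suffix_paths_def length_Suc_conv)

lemma suffix_paths_step:
  assumes "t < n"
  shows "suffix_paths n w t u = (\<lambda>(v, ps). u # ps) ` (SIGMA v:{..<w (Suc t)}. suffix_paths n w (Suc t) v)"
proof (intro set_eqI iffI)
  fix ps assume ps: "ps \<in> suffix_paths n w t u"
  then obtain ps' where ps': "ps = u # ps'"
    by (cases ps) (auto simp: suffix_paths_def)
  have bound: "ps' ! k < w (Suc t + k)" if "k \<le> n - Suc t" for k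
    using ps that assms unfolding suffix_paths_def ps' by (auto elim!: allE[of _ "Suc k"])
  have "ps' \<in> suffix_paths n w (Suc t) (ps' ! 0)" "ps' ! 0 < w (Suc t)"
    using ps assms bound bound[of 0] unfolding ps' suffix_paths_def by (auto simp: Suc_diff_Suc)
  then show "ps \<in> (\<lambda>(v, ps). u # ps) ` (SIGMA v:{..<w (Suc t)}. suffix_paths n w (Suc t) v)"
    using ps' by force
next
  fix ps assume "ps \<in> (\<lambda>(v, ps). u # ps) ` (SIGMA v:{..<w (Suc t)}. suffix_paths n w (Suc t) v)"
  then obtain v ps' where ps': "ps = u # ps'" "v < w (Suc t)" "ps' \<in> suffix_paths n w (Suc t) v"
    by auto
  have "(u # ps') ! k < w (t + k)" if "0 < k" "k \<le> n - t" for k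
  proof (cases k)
    case (Suc k')
    then show ?thesis
      using that ps'(2,3) by (cases "k' = 0") (auto simp: suffix_paths_def)
  qed (use that in simp)
  then show "ps \<in> suffix_paths n w t u"
    using ps'(3) assms unfolding ps'(1) suffix_paths_def by (auto simp: Suc_diff_Suc)
qed

lemma finite_suffix_paths: "finite (suffix_paths n w t u)"
proof (induction "n - t" arbitrary: t u)
  case 0
  then have "suffix_paths n w t u \<subseteq> {[0]}"
    by (auto simp: suffix_paths_def length_Suc_conv)
  then show ?case by (rule finite_subset) simp
next
  case (Suc m)
  then have "t < n" "m = n - Suc t" by auto
  with Suc.hyps(1) show ?case
    by (simp add: suffix_paths_step)
qed

lemma abp_value_eq_path_sum:
  "t \<le> n \<Longrightarrow> abp_value n w L t u =
     (\<Sum>ps\<in>suffix_paths n w t u. \<Prod>k<n - t. upoly_in (t + k) (L (t + k) (ps ! k) (ps ! Suc k)))"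
proof (induction "n - t" arbitrary: t u)
  case 0
  then have "t = n" by simp
  then show ?case
    by (simp add: abp_value_sink suffix_paths_sink)
next
  case (Suc m)
  then have t_less: "t < n" and m: "m = n - Suc t" by auto
  define weight where "weight ps = (\<Prod>k<n - Suc t. upoly_in (Suc t + k) (L (Suc t + k) (ps ! k) (ps ! Suc k)))"
    for ps
  let ?S = "SIGMA v:{..<w (Suc t)}. suffix_paths n w (Suc t) v"
  have inj: "inj_on (\<lambda>(v, ps). u # ps) ?S"
    by (rule inj_onI) (auto simp: suffix_paths_def)
  have cons_weight: "(\<Prod>k<n - t. upoly_in (t + k) (L (t + k) ((u # ps) ! k) (ps ! k)))
      = upoly_in t (L t u v) * weight ps" if "ps \<in> suffix_paths n w (Suc t) v" for v ps
  proof -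
    have "ps ! 0 = v" using that by (simp add: suffix_paths_def)
    then show ?thesis
      unfolding Suc_diff_Suc[OF t_less, symmetric] prod.lessThan_Suc_shift by (simp add: weight_def)
  qed
  have "(\<Sum>ps\<in>suffix_paths n w t u. \<Prod>k<n - t. upoly_in (t + k) (L (t + k) (ps ! k) (ps ! Suc k)))
      = (\<Sum>(v, ps)\<in>?S. upoly_in t (L t u v) * weight ps)"
    unfolding suffix_paths_step[OF t_less] sum.reindex[OF inj]
    by (intro sum.cong) (auto simp: cons_weight)
  also have "\<dots> = (\<Sum>v<w (Suc t). upoly_in t (L t u v) * (\<Sum>ps\<in>suffix_paths n w (Suc t) v. weight ps))"
    by (simp add: sum.Sigma[symmetric] finite_suffix_paths sum_distrib_left)
  also have "\<dots> = abp_value n w L t u"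
    using Suc.hyps(1)[OF m] t_less by (simp add: abp_value_step weight_def)
  finally show ?case ..
qed

lemma abp_eval_eq_value:
  assumes "w 0 > 0"
  shows "abp_eval n w L = abp_value n w L 0 0"
proof -
  have "abp_paths n w = suffix_paths n w 0 0"
    using assms by (auto simp: abp_paths_def suffix_paths_def) (metis neq0_conv)
  then show ?thesis
    by (simp add: abp_eval_def abp_value_eq_path_sum)
qed

section \<open>Bounded ABPs and the power construction\<close>

definition abp_bounded :: "nat \<Rightarrow> (nat \<Rightarrow> nat) \<Rightarrow> (nat \<Rightarrow> nat \<Rightarrow> nat \<Rightarrow> 'a::comm_ring_1 poly) \<Rightarrow> nat \<Rightarrow> nat \<Rightarrow> bool" where
  "abp_bounded n w L B D \<longleftrightarrow> w 0 = 1 \<and> w n = 1 \<and> (\<forall>t\<le>n. 1 \<le> w t \<and> w t \<le> B)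
     \<and> (\<forall>t<n. \<forall>u v. degree (L t u v) \<le> D)"

lemma abp_bounded_mono: "abp_bounded n w L B D \<Longrightarrow> B \<le> B' \<Longrightarrow> D \<le> D' \<Longrightarrow> abp_bounded n w L B' D'"
  unfolding abp_bounded_def by (meson order_trans)

lemma abp_one:
  "abp_bounded n (\<lambda>_. 1) (\<lambda>_ _ _. 1::'a::comm_ring_1 poly) 1 0
   \<and> abp_value n (\<lambda>_. 1) (\<lambda>_ _ _. 1::'a poly) 0 0 = 1"
proof -
  have "abp_value n (\<lambda>_. 1) (\<lambda>_ _ _. 1::'a poly) t 0 = 1" if "t \<le> n" for t
    using that
  proof (induction "n - t" arbitrary: t)
    case 0
    then show ?case by (simp add: abp_value_sink)
  next
    case (Suc m)
    then have "t < n" "m = n - Suc t" by auto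
    then show ?case using Suc.hyps(1)[of "Suc t"] by (simp add: abp_value_step)
  qed
  then show ?thesis by (simp add: abp_bounded_def)
qed

text \<open>Vertex r of an inner layer t stands for the suffix
  power (sum_{m>=t} g_m(x_m))^r; the edge to vertex v of the next layer carries the binomial
  term (r choose v) g_t^(r-v).  At the source r is e.\<close>
definition suffix_sum :: "nat \<Rightarrow> (nat \<Rightarrow> 'a::comm_ring_1 poly) \<Rightarrow> nat \<Rightarrow> 'a mpoly" where
  "suffix_sum n g t = (\<Sum>m\<in>{t..<n}. upoly_in m (g m))"

definition power_width :: "nat \<Rightarrow> nat \<Rightarrow> nat \<Rightarrow> nat" where
  "power_width n e t = (if 0 < t \<and> t < n then Suc e else 1)"

definition power_label :: "nat \<Rightarrow> (nat \<Rightarrow> 'a::comm_ring_1 poly) \<Rightarrow> nat \<Rightarrow> nat \<Rightarrow> nat \<Rightarrow> 'a poly" where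
  "power_label e g t u v = (let r = (if t = 0 then e else u) in
     if v \<le> r \<and> r \<le> e then of_nat (r choose v) * g t ^ (r - v) else 0)"

text \<open>The invariant of the power ABP; one layer is the binomial expansion of
  (g_t(x_t) + suffix_sum (t+1))^r.\<close>
lemma power_value:
  assumes "n \<ge> 1" "t \<le> n" "u < power_width n e t"
  shows "abp_value n (power_width n e) (power_label e g) t u = suffix_sum n g t ^ (if t = 0 then e else u)"
  using assms(2,3)
proof (induction "n - t" arbitrary: t u)
  case 0
  then have "t = n" "u = 0" using assms(1) by (auto simp: power_width_def)
  then show ?case using assms(1) by (simp add: abp_value_sink suffix_sum_def)
next
  case (Suc m)
  then have t_less: "t < n" and m: "m = n - Suc t" by auto
  define r where "r = (if t = 0 then e else u)"
  have r_le: "r \<le> e" using Suc.prems t_less by (auto simp: r_def power_width_def)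
  define X where "X = upoly_in t (g t)"
  define S where "S = suffix_sum n g (Suc t)"
  have suffix_split: "suffix_sum n g t = X + S"
    using t_less by (simp add: suffix_sum_def X_def S_def sum.atLeast_Suc_lessThan)
  have label: "upoly_in t (power_label e g t u v) = (if v \<le> r then of_nat (r choose v) * X ^ (r - v) else 0)" for v
    using r_le unfolding power_label_def Let_def r_def[symmetric]
    by (auto simp: upoly_in_mult upoly_in_power X_def)
  have next_value: "abp_value n (power_width n e) (power_label e g) (Suc t) v = S ^ v"
    if "v < power_width n e (Suc t)" for v
    using Suc.hyps(1)[OF m, of v] t_less that by (auto simp: power_width_def S_def suffix_sum_def)
  have "abp_value n (power_width n e) (power_label e g) t u
      = (\<Sum>v<power_width n e (Suc t). (if v \<le> r then of_nat (r choose v) * X ^ (r - v) else 0) * S ^ v)"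
    unfolding abp_value_step[OF t_less] by (simp add: label next_value)
  also have "\<dots> = (\<Sum>v\<le>r. of_nat (r choose v) * S ^ v * X ^ (r - v))"
  proof (cases "Suc t = n")
    case True
    then have "S = 0" by (simp add: S_def suffix_sum_def)
    with True show ?thesis by (simp add: power_width_def power_0_left sum.atMost_shift)
  next
    case False
    then show ?thesis using r_le t_less
      by (intro sum.mono_neutral_cong_right) (auto simp: power_width_def)
  qed
  also have "\<dots> = (S + X) ^ r"
    by (simp add: binomial_ring)
  finally show ?case
    using suffix_split by (simp add: r_def add.commute)
qed

lemma degree_power_label: "degree (power_label e g t u v) \<le> e * degree (g t)"
proof -
  have "degree (of_nat c * g t ^ k) \<le> e * degree (g t)" if "k \<le> e" for c k
  proof -
    have "degree (of_nat c * g t ^ k) \<le> degree (g t ^ k)"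
      using degree_mult_le[of "of_nat c" "g t ^ k"] by simp
    also have "\<dots> \<le> k * degree (g t)"
      using degree_power_le[of "g t" k] by (simp add: mult.commute)
    also have "\<dots> \<le> e * degree (g t)"
      using that by simp
    finally show ?thesis .
  qed
  then show ?thesis
    unfolding power_label_def Let_def by auto
qed

lemma abp_power:
  assumes "n \<ge> 1"
  shows "abp_bounded n (power_width n e) (power_label e g) (Suc e) (e * mdeg (d4_factor n g))
    \<and> abp_value n (power_width n e) (power_label e g) 0 0 = d4_factor n g ^ e"
proof -
  have "abp_value n (power_width n e) (power_label e g) 0 0 = d4_factor n g ^ e"
    using power_value[OF assms, of 0 0 e g]
    by (simp add: power_width_def suffix_sum_def d4_factor_def atLeast0LessThan)
  moreover have "degree (power_label e g t u v) \<le> e * mdeg (d4_factor n g)" if "t < n" for t u v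
    using degree_power_label[of e g t u v] degree_le_mdeg_d4_factor[OF that, of g]
    by (meson le_trans mult_le_mono2)
  ultimately show ?thesis
    using assms by (auto simp: abp_bounded_def power_width_def)
qed

section \<open>Products and sums of ABPs\<close>

lemma sum_lessThan_add_nat: "(\<Sum>v<a + b. f v) = (\<Sum>v<a. f v) + (\<Sum>x<b. f (a + x::nat))"
  by (induction b) (simp_all add: add.assoc)

lemma sum_lessThan_mult_nat: "(\<Sum>v<a * b. f v) = (\<Sum>y<b. \<Sum>x<a. f (x + y * a::nat))"
proof -
  have "(\<Sum>v<b * a. f v) = (\<Sum>y<b. sum f {y * a..<y * a + a})"
    by (rule sum.nat_group[symmetric])
  also have "\<dots> = (\<Sum>y<b. \<Sum>x<a. f (x + y * a))"
  proof (rule sum.cong[OF refl])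
    fix y
    have "sum f {0 + y * a..<a + y * a} = sum (\<lambda>x. f (x + y * a)) {0..<a}"
      by (rule sum.shift_bounds_nat_ivl)
    then show "sum f {y * a..<y * a + a} = (\<Sum>x<a. f (x + y * a))"
      by (simp add: add.commute atLeast0LessThan)
  qed
  finally show ?thesis by (simp add: mult.commute)
qed

text \<open>Tensor product: vertex u of layer t encodes the pair (u mod w1 t, u div w1 t), and
  labels multiply.\<close>
definition tensor_width :: "(nat \<Rightarrow> nat) \<Rightarrow> (nat \<Rightarrow> nat) \<Rightarrow> nat \<Rightarrow> nat" where
  "tensor_width w1 w2 t = w1 t * w2 t"

definition tensor_label :: "(nat \<Rightarrow> nat) \<Rightarrow> (nat \<Rightarrow> nat \<Rightarrow> nat \<Rightarrow> 'a::comm_ring_1 poly)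
    \<Rightarrow> (nat \<Rightarrow> nat \<Rightarrow> nat \<Rightarrow> 'a poly) \<Rightarrow> nat \<Rightarrow> nat \<Rightarrow> nat \<Rightarrow> 'a poly" where
  "tensor_label w1 L1 L2 t u v =
     L1 t (u mod w1 t) (v mod w1 (Suc t)) * L2 t (u div w1 t) (v div w1 (Suc t))"

lemma tensor_value:
  assumes pos: "\<And>t. t \<le> n \<Longrightarrow> w1 t \<ge> 1" and "t \<le> n"
  shows "abp_value n (tensor_width w1 w2) (tensor_label w1 L1 L2) t u
    = abp_value n w1 L1 t (u mod w1 t) * abp_value n w2 L2 t (u div w1 t)"
  using assms(2)
proof (induction "n - t" arbitrary: t u)
  case 0
  then have "t = n" by simp
  moreover have "u = 0 \<longleftrightarrow> u mod w1 n = 0 \<and> u div w1 n = 0"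
    using pos[of n] by (metis div_0 div_mult_mod_eq mod_0 mult_0_right add_0 order.refl)
  ultimately show ?case by (simp add: abp_value_sink)
next
  case (Suc m)
  then have t_less: "t < n" and m: "m = n - Suc t" by auto
  define a where "a = w1 (Suc t)"
  define b where "b = w2 (Suc t)"
  define u1 where "u1 = u mod w1 t"
  define u2 where "u2 = u div w1 t"
  define R1 where "R1 x = upoly_in t (L1 t u1 x) * abp_value n w1 L1 (Suc t) x" for x
  define R2 where "R2 y = upoly_in t (L2 t u2 y) * abp_value n w2 L2 (Suc t) y" for y
  have a_pos: "a \<ge> 1" using pos t_less by (simp add: a_def Suc_leI)
  have next_value: "abp_value n (tensor_width w1 w2) (tensor_label w1 L1 L2) (Suc t) v
      = abp_value n w1 L1 (Suc t) (v mod a) * abp_value n w2 L2 (Suc t) (v div a)" for v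
    using Suc.hyps(1)[OF m] t_less by (simp add: a_def Suc_leI)
  have "abp_value n (tensor_width w1 w2) (tensor_label w1 L1 L2) t u
      = (\<Sum>v<a * b. upoly_in t (L1 t u1 (v mod a) * L2 t u2 (v div a))
          * (abp_value n w1 L1 (Suc t) (v mod a) * abp_value n w2 L2 (Suc t) (v div a)))"
    unfolding abp_value_step[OF t_less] next_value
    by (simp add: tensor_width_def tensor_label_def a_def b_def u1_def u2_def)
  also have "\<dots> = (\<Sum>y<b. \<Sum>x<a. R1 x * R2 y)"
    unfolding sum_lessThan_mult_nat using a_pos
    by (intro sum.cong refl) (simp add: R1_def R2_def upoly_in_mult ac_simps)
  also have "\<dots> = sum R1 {..<a} * sum R2 {..<b}"
    by (simp add: sum_product sum.swap[of _ "{..<b}"])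
  also have "\<dots> = abp_value n w1 L1 t u1 * abp_value n w2 L2 t u2"
    unfolding abp_value_step[OF t_less] R1_def R2_def a_def b_def ..
  finally show ?case by (simp add: u1_def u2_def)
qed

lemma abp_product:
  assumes "abp_bounded n w1 L1 B1 D1" "abp_bounded n w2 L2 B2 D2"
  shows "abp_bounded n (tensor_width w1 w2) (tensor_label w1 L1 L2) (B1 * B2) (D1 + D2)
    \<and> abp_value n (tensor_width w1 w2) (tensor_label w1 L1 L2) 0 0 = abp_value n w1 L1 0 0 * abp_value n w2 L2 0 0"
proof -
  have "abp_value n (tensor_width w1 w2) (tensor_label w1 L1 L2) 0 0 = abp_value n w1 L1 0 0 * abp_value n w2 L2 0 0"
    using tensor_value[of n w1 0 w2 L1 L2 0] assms(1) by (simp add: abp_bounded_def)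
  moreover have "degree (tensor_label w1 L1 L2 t u v) \<le> D1 + D2" if "t < n" for t u v
    using assms that unfolding abp_bounded_def tensor_label_def
    by (meson add_mono degree_mult_le order_trans)
  moreover have "1 \<le> tensor_width w1 w2 t \<and> tensor_width w1 w2 t \<le> B1 * B2" if "t \<le> n" for t
    using assms that unfolding abp_bounded_def tensor_width_def by (simp add: mult_le_mono)
  ultimately show ?thesis
    using assms unfolding abp_bounded_def by (simp add: tensor_width_def)
qed

text \<open>Sum: the inner layers of the second ABP are placed after those of the first, while the
  source and sink layers (of width 1) are shared.  A vertex u of layer t belongs to the first
  ABP if in_first holds, to the second ABP (as its vertex second_index) if in_second holds;
  at the source and sink both hold.\<close>
definition inner_layer :: "nat \<Rightarrow> nat \<Rightarrow> bool" where
  "inner_layer n t \<longleftrightarrow> 0 < t \<and> t < n"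

definition sum_width :: "nat \<Rightarrow> (nat \<Rightarrow> nat) \<Rightarrow> (nat \<Rightarrow> nat) \<Rightarrow> nat \<Rightarrow> nat" where
  "sum_width n w1 w2 t = (if inner_layer n t then w1 t + w2 t else 1)"

definition in_first :: "nat \<Rightarrow> (nat \<Rightarrow> nat) \<Rightarrow> nat \<Rightarrow> nat \<Rightarrow> bool" where
  "in_first n w1 t u \<longleftrightarrow> (if inner_layer n t then u < w1 t else u = 0)"

definition in_second :: "nat \<Rightarrow> (nat \<Rightarrow> nat) \<Rightarrow> nat \<Rightarrow> nat \<Rightarrow> bool" where
  "in_second n w1 t u \<longleftrightarrow> (if inner_layer n t then w1 t \<le> u else u = 0)"

definition second_index :: "nat \<Rightarrow> (nat \<Rightarrow> nat) \<Rightarrow> nat \<Rightarrow> nat \<Rightarrow> nat" where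
  "second_index n w1 t u = (if inner_layer n t then u - w1 t else u)"

definition sum_label :: "nat \<Rightarrow> (nat \<Rightarrow> nat) \<Rightarrow> (nat \<Rightarrow> nat \<Rightarrow> nat \<Rightarrow> 'a::comm_ring_1 poly)
    \<Rightarrow> (nat \<Rightarrow> nat \<Rightarrow> nat \<Rightarrow> 'a poly) \<Rightarrow> nat \<Rightarrow> nat \<Rightarrow> nat \<Rightarrow> 'a poly" where
  "sum_label n w1 L1 L2 t u v =
     (if in_first n w1 t u \<and> in_first n w1 (Suc t) v then L1 t u v else 0)
   + (if in_second n w1 t u \<and> in_second n w1 (Suc t) v
      then L2 t (second_index n w1 t u) (second_index n w1 (Suc t) v) else 0)"

lemma sum_value_last:
  assumes "w1 n = 1" "w2 n = 1" "Suc t = n"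
  shows "abp_value n (sum_width n w1 w2) (sum_label n w1 L1 L2) t u =
     (if in_first n w1 t u then abp_value n w1 L1 t u else 0)
   + (if in_second n w1 t u then abp_value n w2 L2 t (second_index n w1 t u) else 0)"
proof -
  have t_less: "t < n" using assms(3) by simp
  have sink: "in_first n w1 (Suc t) 0" "in_second n w1 (Suc t) 0" "second_index n w1 (Suc t) 0 = 0"
    "sum_width n w1 w2 (Suc t) = 1"
    using assms(3) by (auto simp: in_first_def in_second_def second_index_def inner_layer_def sum_width_def)
  show ?thesis
    unfolding abp_value_step[OF t_less] using assms sink
    by (simp add: abp_value_sink sum_label_def upoly_in_add)
qed

text \<open>Induction step: one layer of the sum ABP splits into a block of the first ABP followed
  by a block of the second.\<close>
lemma sum_value_step:
  assumes t_less: "Suc t < n"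
    and next_value: "\<And>v. abp_value n (sum_width n w1 w2) (sum_label n w1 L1 L2) (Suc t) v =
       (if in_first n w1 (Suc t) v then abp_value n w1 L1 (Suc t) v else 0)
     + (if in_second n w1 (Suc t) v then abp_value n w2 L2 (Suc t) (second_index n w1 (Suc t) v) else 0)"
  shows "abp_value n (sum_width n w1 w2) (sum_label n w1 L1 L2) t u =
     (if in_first n w1 t u then abp_value n w1 L1 t u else 0)
   + (if in_second n w1 t u then abp_value n w2 L2 t (second_index n w1 t u) else 0)"
proof -
  define a where "a = w1 (Suc t)"
  define b where "b = w2 (Suc t)"
  let ?V = "abp_value n (sum_width n w1 w2) (sum_label n w1 L1 L2) (Suc t)"
  have inner: "inner_layer n (Suc t)" using t_less by (simp add: inner_layer_def)
  have first_block: "in_first n w1 (Suc t) v \<and> \<not> in_second n w1 (Suc t) v" if "v < a" for v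
    using inner that by (simp add: in_first_def in_second_def a_def)
  have second_block: "in_second n w1 (Suc t) (a + x) \<and> \<not> in_first n w1 (Suc t) (a + x)
      \<and> second_index n w1 (Suc t) (a + x) = x" for x
    using inner by (simp add: in_first_def in_second_def second_index_def a_def)
  have "abp_value n (sum_width n w1 w2) (sum_label n w1 L1 L2) t u
      = (\<Sum>v<a. upoly_in t (sum_label n w1 L1 L2 t u v) * ?V v)
      + (\<Sum>x<b. upoly_in t (sum_label n w1 L1 L2 t u (a + x)) * ?V (a + x))"
    unfolding abp_value_step[OF Suc_lessD[OF t_less]]
    using inner by (simp add: sum_width_def a_def b_def sum_lessThan_add_nat)
  also have "\<dots> = (\<Sum>v<a. if in_first n w1 t u then upoly_in t (L1 t u v) * abp_value n w1 L1 (Suc t) v else 0)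
      + (\<Sum>x<b. if in_second n w1 t u
           then upoly_in t (L2 t (second_index n w1 t u) x) * abp_value n w2 L2 (Suc t) x else 0)"
    by (intro arg_cong2[where f = "(+)"] sum.cong refl)
      (simp_all add: first_block second_block next_value sum_label_def upoly_in_add)
  also have "\<dots> = (if in_first n w1 t u then abp_value n w1 L1 t u else 0)
      + (if in_second n w1 t u then abp_value n w2 L2 t (second_index n w1 t u) else 0)"
    using t_less by (simp add: abp_value_step a_def b_def)
  finally show ?thesis .
qed

lemma sum_value:
  assumes "w1 n = 1" "w2 n = 1" "t < n"
  shows "abp_value n (sum_width n w1 w2) (sum_label n w1 L1 L2) t u =
     (if in_first n w1 t u then abp_value n w1 L1 t u else 0)
   + (if in_second n w1 t u then abp_value n w2 L2 t (second_index n w1 t u) else 0)"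
  using assms(3)
proof (induction "n - Suc t" arbitrary: t u)
  case 0
  then have "Suc t = n" by simp
  then show ?case by (rule sum_value_last[of w1 n w2, OF assms(1,2)])
next
  case (Suc m)
  then show ?case using sum_value_step[of t n w1 w2 L1 L2] Suc.hyps(1)[of "Suc t"] by simp
qed

lemma abp_sum:
  assumes "n \<ge> 1" "abp_bounded n w1 L1 B1 D1" "abp_bounded n w2 L2 B2 D2"
  shows "abp_bounded n (sum_width n w1 w2) (sum_label n w1 L1 L2) (B1 + B2) (max D1 D2)
    \<and> abp_value n (sum_width n w1 w2) (sum_label n w1 L1 L2) 0 0 = abp_value n w1 L1 0 0 + abp_value n w2 L2 0 0"
proof -
  have "abp_value n (sum_width n w1 w2) (sum_label n w1 L1 L2) 0 0 = abp_value n w1 L1 0 0 + abp_value n w2 L2 0 0"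
    using sum_value[of w1 n w2 0 L1 L2 0] assms
    by (simp add: abp_bounded_def in_first_def in_second_def second_index_def inner_layer_def)
  moreover have "degree (sum_label n w1 L1 L2 t u v) \<le> max D1 D2" if "t < n" for t u v
  proof -
    have "degree (L1 t u v) \<le> max D1 D2"
      "degree (L2 t (second_index n w1 t u) (second_index n w1 (Suc t) v)) \<le> max D1 D2"
      using assms(2,3) that unfolding abp_bounded_def by (meson max.coboundedI1 max.coboundedI2)+
    then show ?thesis
      unfolding sum_label_def by (auto intro: order_trans[OF degree_add_le])
  qed
  moreover have "1 \<le> sum_width n w1 w2 t \<and> sum_width n w1 w2 t \<le> B1 + B2" if "t \<le> n" for t
    using assms that unfolding abp_bounded_def sum_width_def by (auto simp: add_le_mono trans_le_add1)
  ultimately show ?thesis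
    using assms unfolding abp_bounded_def by (simp add: sum_width_def inner_layer_def)
qed

section \<open>From the circuit to the ABP\<close>

definition summand_degree :: "nat \<Rightarrow> (nat \<times> (nat \<Rightarrow> 'a::comm_ring_1 poly)) list \<Rightarrow> nat" where
  "summand_degree n Psi = (\<Sum>(e, g)\<leftarrow>Psi. e * mdeg (d4_factor n g))"

lemma abp_summand:
  assumes "n \<ge> 1"
  shows "\<exists>w L. abp_bounded n w L (exp_prod Psi) (summand_degree n Psi)
     \<and> abp_value n w L 0 0 = (\<Prod>(e, g)\<leftarrow>Psi. d4_factor n g ^ e)"
proof (induction Psi)
  case Nil
  then show ?case
    using abp_one by (fastforce simp: exp_prod_def summand_degree_def)
next
  case (Cons eg Psi)
  obtain e g where eg: "eg = (e, g)" by (cases eg)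
  obtain w2 L2 where rest: "abp_bounded n w2 L2 (exp_prod Psi) (summand_degree n Psi)"
    "abp_value n w2 L2 0 0 = (\<Prod>(e, g)\<leftarrow>Psi. d4_factor n g ^ e)"
    using Cons.IH by blast
  have power: "abp_bounded n (power_width n e) (power_label e g) (Suc e) (e * mdeg (d4_factor n g))"
    "abp_value n (power_width n e) (power_label e g) 0 0 = d4_factor n g ^ e"
    using abp_power[OF assms] by blast+
  have "exp_prod (eg # Psi) = Suc e * exp_prod Psi"
    "summand_degree n (eg # Psi) = e * mdeg (d4_factor n g) + summand_degree n Psi"
    "(\<Prod>(e, g)\<leftarrow>eg # Psi. d4_factor n g ^ e) = d4_factor n g ^ e * (\<Prod>(e, g)\<leftarrow>Psi. d4_factor n g ^ e)"
    by (simp_all add: exp_prod_def summand_degree_def eg)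
  then show ?case
    using abp_product[OF power(1) rest(1)] power(2) rest(2) by metis
qed

lemma abp_circuit:
  assumes "n \<ge> 1" "C \<noteq> []"
    and "\<forall>Psi\<in>set C. exp_prod Psi \<le> M \<and> summand_degree n Psi \<le> D"
  shows "\<exists>w L. abp_bounded n w L (length C * M) D \<and> abp_value n w L 0 0 = d4_eval n C"
  using assms(2,3)
proof (induction C)
  case (Cons Psi C)
  obtain w1 L1 where first: "abp_bounded n w1 L1 M D"
    "abp_value n w1 L1 0 0 = (\<Prod>(e, g)\<leftarrow>Psi. d4_factor n g ^ e)"
    using abp_summand[OF assms(1), of Psi] Cons.prems(2) abp_bounded_mono by fastforce
  have eval: "d4_eval n (Psi # C) = (\<Prod>(e, g)\<leftarrow>Psi. d4_factor n g ^ e) + d4_eval n C"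
    by (simp add: d4_eval_def)
  show ?case
  proof (cases "C = []")
    case True
    then show ?thesis using first eval by (auto simp: d4_eval_def)
  next
    case False
    then obtain w2 L2 where rest: "abp_bounded n w2 L2 (length C * M) D" "abp_value n w2 L2 0 0 = d4_eval n C"
      using Cons.IH Cons.prems(2) by auto
    have "abp_bounded n (sum_width n w1 w2) (sum_label n w1 L1 L2) (M + length C * M) D
        \<and> abp_value n (sum_width n w1 w2) (sum_label n w1 L1 L2) 0 0 = d4_eval n (Psi # C)"
      using abp_sum[OF assms(1) first(1) rest(1)] first(2) rest(2) eval by auto
    then show ?thesis by auto
  qed
qed simp

theorem lemma5p5:
  fixes n :: nat and C :: "'a::field d4circuit"
  assumes "n \<ge> 1" and "C \<noteq> []"
  shows "\<exists>w L. w 0 = 1 \<and> w n = 1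
    \<and> abp_eval n w L = d4_eval n C
    \<and> abp_width n w \<le> length C * d4_max_exp_prod C
    \<and> (\<forall>j<n. \<forall>u v. degree (L j u v) \<le> d4_sdeg n C)"
proof -
  have "\<forall>Psi\<in>set C. exp_prod Psi \<le> d4_max_exp_prod C \<and> summand_degree n Psi \<le> d4_sdeg n C"
    unfolding d4_max_exp_prod_def d4_sdeg_def summand_degree_def by (auto intro!: Max_ge)
  then obtain w L where bounded: "abp_bounded n w L (length C * d4_max_exp_prod C) (d4_sdeg n C)"
    and computes: "abp_value n w L 0 0 = d4_eval n C"
    using abp_circuit[OF assms] by blast
  have "abp_eval n w L = d4_eval n C"
    using bounded computes abp_eval_eq_value[of w n L] by (simp add: abp_bounded_def)
  moreover have "abp_width n w \<le> length C * d4_max_exp_prod C"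
    using bounded unfolding abp_width_def abp_bounded_def by (subst Max_le_iff) auto
  ultimately show ?thesis
    using bounded unfolding abp_bounded_def by blast
qed

end
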